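(* Let $G$ be a simple graph with at least one edge, with Laplacian eigenvalues $\mu_1\ge\mu_2\ge\cdots\ge\mu_n$, and (having fixed orientations of the edges and triangles of $G$) let $\eta_1\ge\eta_2\ge\cdots\ge\eta_t$ be the eigenvalues of the adjacency matrix $A(G_{\vartriangle})$ of the triangular signed graph $G_{\vartriangle}$. Then the non-zero eigenvalues of $\mathcal{H}(G)$ (with multiplicities) are exactly all $\mu_i$ with $\mu_i\ne 0$ together with all $3+\eta_j$ with $\eta_j\ne -3$. In particular, the largest eigenvalue of $\mathcal{H}(G)$ is $\max\{\mu_1,3+\eta_1\}$ (the term $3+\eta_1$ being absent when $G$ has no triangles).
   Context: $L(G)=D(G)-A(G)$ is the Laplacian matrix. For an oriented edge $e$ write $e^-$ for its tail and $e^+$ for its head. For distinct edges $e,e'$: $e\leftrightarrow e'$ means $e^+=e'^-$ or $e'^+=e^-$; $e\overset{\pm}{\sim}e'$ means $e^+=e'^+$ or $e^-=e'^-$; $e\vartriangle e'$ means $e,e'$ are two edges of a common triangle. $\triangle(e)$ is the number of triangles containing $e$. The Helmholtzian matrix $\mathcal{H}(G)=(h_{ee'})$ is indexed by edges, with $h_{ee}=\triangle(e)+2$, and for $e\ne e'$: $h_{ee'}=-1$ if $e\leftrightarrow e'$ and not $e\vartriangle e'$; $h_{ee'}=1$ if $e\overset{\pm}{\sim}e'$ and not $e\vartriangle e'$; $h_{ee'}=0$ otherwise. Each triangle $\vartriangle$ is given a cyclic orientation; for an edge $e$ of $\vartriangle$ write $e\in\vartriangle^+$ if the orientation of $e$ agrees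 with that of $\vartriangle$ and $e\in\vartriangle^-$ otherwise. The triangular signed graph $G_{\vartriangle}$ has the $t$ triangles of $G$ as vertices; two distinct triangles $\vartriangle_1,\vartriangle_2$ sharing an edge $e$ are joined by a positive edge if $e\in\vartriangle_1^+\cap\vartriangle_2^+$ or $e\in\vartriangle_1^-\cap\vartriangle_2^-$, and by a negative edge otherwise; triangles sharing no edge are non-adjacent. $A(G_{\vartriangle})$ has entry $\pm1$ for positive/negative edges and $0$ elsewhere. *)

theory Defs
  imports Main "Jordan_Normal_Form.Char_Poly"
begin

text \<open>A simple graph on vertex set {0..<n} with a fixed orientation of its edges is
given by a list es of oriented edges (tail, head). Edges of G are indexed by
positions in es.\<close>

definition simple_oriented_graph :: "nat \<Rightarrow> (nat \<times> nat) list \<Rightarrow> bool" where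
  "simple_oriented_graph n es \<longleftrightarrow> distinct es \<and>
     (\<forall>(u,v) \<in> set es. u < n \<and> v < n \<and> u \<noteq> v \<and> (v,u) \<notin> set es)"

definition adj :: "(nat \<times> nat) list \<Rightarrow> nat \<Rightarrow> nat \<Rightarrow> bool" where
  "adj es u v \<longleftrightarrow> (u,v) \<in> set es \<or> (v,u) \<in> set es"

definition laplacian :: "nat \<Rightarrow> (nat \<times> nat) list \<Rightarrow> real mat" where
  "laplacian n es = mat n n (\<lambda>(i,j).
     if i = j then real (card {v. v < n \<and> adj es i v})
     else if adj es i j then -1 else 0)"

definition is_triangle :: "(nat \<times> nat) list \<Rightarrow> nat set \<Rightarrow> bool" where
  "is_triangle es T \<longleftrightarrow> card T = 3 \<and> (\<forall>u\<in>T. \<forall>v\<in>T. u \<noteq> v \<longrightarrow> adj es u v)"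

definition edge_in :: "nat \<times> nat \<Rightarrow> nat set \<Rightarrow> bool" where
  "edge_in e T \<longleftrightarrow> fst e \<in> T \<and> snd e \<in> T"

definition num_tri :: "(nat \<times> nat) list \<Rightarrow> nat \<times> nat \<Rightarrow> nat" where
  "num_tri es e = card {T. is_triangle es T \<and> edge_in e T}"

definition common_tri :: "(nat \<times> nat) list \<Rightarrow> nat \<times> nat \<Rightarrow> nat \<times> nat \<Rightarrow> bool" where
  "common_tri es e e' \<longleftrightarrow> (\<exists>T. is_triangle es T \<and> edge_in e T \<and> edge_in e' T)"

definition head_tail :: "nat \<times> nat \<Rightarrow> nat \<times> nat \<Rightarrow> bool" where
  "head_tail e e' \<longleftrightarrow> snd e = fst e' \<or> snd e' = fst e"

definition same_end :: "nat \<times> nat \<Rightarrow> nat \<times> nat \<Rightarrow> bool" where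
  "same_end e e' \<longleftrightarrow> snd e = snd e' \<or> fst e = fst e'"

definition helmholtzian :: "(nat \<times> nat) list \<Rightarrow> real mat" where
  "helmholtzian es = mat (length es) (length es) (\<lambda>(i,j).
     let e = es ! i; e' = es ! j in
     if i = j then real (num_tri es e) + 2
     else if head_tail e e' \<and> \<not> common_tri es e e' then -1
     else if same_end e e' \<and> \<not> common_tri es e e' then 1
     else 0)"

text \<open>An oriented triangle (a,b,c) carries the cyclic orientation a \<rightarrow> b \<rightarrow> c \<rightarrow> a.\<close>
definition tri_set :: "nat \<times> nat \<times> nat \<Rightarrow> nat set" where
  "tri_set t = (case t of (a,b,c) \<Rightarrow> {a,b,c})"

definition tri_pos :: "nat \<times> nat \<times> nat \<Rightarrow> nat \<times> nat \<Rightarrow> bool" where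
  "tri_pos t e = (case t of (a,b,c) \<Rightarrow> e \<in> {(a,b),(b,c),(c,a)})"

definition tri_neg :: "nat \<times> nat \<times> nat \<Rightarrow> nat \<times> nat \<Rightarrow> bool" where
  "tri_neg t e = (case t of (a,b,c) \<Rightarrow> e \<in> {(b,a),(c,b),(a,c)})"

definition oriented_triangles :: "(nat \<times> nat) list \<Rightarrow> (nat \<times> nat \<times> nat) list \<Rightarrow> bool" where
  "oriented_triangles es ts \<longleftrightarrow> distinct (map tri_set ts) \<and>
     set (map tri_set ts) = {T. is_triangle es T}"

definition tri_signed_adj :: "(nat \<times> nat) list \<Rightarrow> (nat \<times> nat \<times> nat) list \<Rightarrow> real mat" where
  "tri_signed_adj es ts = mat (length ts) (length ts) (\<lambda>(i,j).
     if i = j then 0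
     else if \<exists>e \<in> set es. edge_in e (tri_set (ts ! i)) \<and> edge_in e (tri_set (ts ! j)) then
       (if \<exists>e \<in> set es. edge_in e (tri_set (ts ! i)) \<and> edge_in e (tri_set (ts ! j)) \<and>
             ((tri_pos (ts ! i) e \<and> tri_pos (ts ! j) e) \<or> (tri_neg (ts ! i) e \<and> tri_neg (ts ! j) e))
        then 1 else -1)
     else 0)"

definition max_eig :: "real mat \<Rightarrow> real" where
  "max_eig A = Max {x. eigenvalue A x}"

end

(* The Helmholtzian is the Hodge Laplacian H = grad grad^T + curl^T curl, where grad is the
   m x n signed edge-vertex incidence matrix and curl the t x m triangle-edge incidence matrix
   of the chosen orientations. Moreover grad^T grad is the graph Laplacian L(G),
   curl curl^T = 3 I + A(G_triangle), and curl grad = 0 (the boundary of a boundary vanishes).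
   With K = (grad | curl^T) this says H = K K^T while K^T K is block diagonal with blocks L(G)
   and 3 I + A(G_triangle), and Sylvester's identity x^(n+t) det (x I - K K^T) =
   x^m det (x I - K^T K) matches the nonzero eigenvalues with multiplicities. All three
   matrices are Gram matrices, so their spectra are real and nonnegative; hence the eigenvalue
   0, which the identity does not control, never affects the largest eigenvalue. *)

theory Submission
  imports Defs
begin

section \<open>Characteristic polynomials\<close>

lemma pcompose_dvd: "p dvd q \<Longrightarrow> pcompose p r dvd pcompose (q :: 'a::comm_ring_1 poly) r"
  by (metis dvdE dvdI pcompose_mult)

lemma pcompose_power: "pcompose (p ^ k) r = pcompose (p :: 'a::comm_ring_1 poly) r ^ k"
  by (induct k) (simp_all add: pcompose_mult pcompose_1)

lemma linear_power_dvd_pcompose_shift_iff: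
  fixes p :: "'a::comm_ring_1 poly"
  shows "[:-x, 1:] ^ k dvd pcompose p [:-c, 1:] \<longleftrightarrow> [:-(x - c), 1:] ^ k dvd p"
proof -
  have shift: "pcompose ([:-a, 1:] ^ k) [:b, 1:] = [:b - a, 1:] ^ k" for a b :: 'a
    by (simp add: pcompose_power pcompose_pCons)
  have inverse: "pcompose (pcompose p [:-c, 1:]) [:c, 1:] = p"
    by (simp add: pcompose_assoc[symmetric] pcompose_pCons)
  have "pcompose ([:-(x - c), 1:] ^ k) [:-c, 1:] = [:-x, 1:] ^ k"
    using shift[of "x - c" "-c"] by simp
  then show ?thesis
    using pcompose_dvd[of "[:-x, 1:] ^ k" "pcompose p [:-c, 1:]" "[:c, 1:]"]
      pcompose_dvd[of "[:-(x - c), 1:] ^ k" p "[:-c, 1:]"]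
    by (auto simp: shift inverse)
qed

lemma order_pcompose_shift:
  fixes p :: "'a::idom poly"
  shows "order x (pcompose p [:-c, 1:]) = order (x - c) p"
proof (cases "p = 0")
  case False
  show ?thesis
  proof (rule order_unique_lemma)
    show "[:-x, 1:] ^ order (x - c) p dvd pcompose p [:-c, 1:]"
      using order_1 linear_power_dvd_pcompose_shift_iff by blast
    show "\<not> [:-x, 1:] ^ Suc (order (x - c) p) dvd pcompose p [:-c, 1:]"
      using order_2[OF False] linear_power_dvd_pcompose_shift_iff by blast
  qed
qed (simp add: Polynomial.order_def)

lemma det_sylvester:
  fixes K :: "'a::idom mat"
  assumes K: "K \<in> carrier_mat m p" and J: "J \<in> carrier_mat p m"
  shows "x ^ p * det (x \<cdot>\<^sub>m 1\<^sub>m m - K * J) = x ^ m * det (x \<cdot>\<^sub>m 1\<^sub>m p - J * K)"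
proof -
  \<comment> \<open>Clearing the block J of M from the right or the block K from the left computes det M twice.\<close>
  define M where "M = four_block_mat (x \<cdot>\<^sub>m 1\<^sub>m m) K J (1\<^sub>m p)"
  define N1 where "N1 = four_block_mat (1\<^sub>m m) (0\<^sub>m m p) (- J) (1\<^sub>m p)"
  define N2 where "N2 = four_block_mat (1\<^sub>m m) (0\<^sub>m m p) (- J) (x \<cdot>\<^sub>m 1\<^sub>m p)"
  have M: "M \<in> carrier_mat (m + p) (m + p)" and N1: "N1 \<in> carrier_mat (m + p) (m + p)"
    and N2: "N2 \<in> carrier_mat (m + p) (m + p)"
    using K J by (simp_all add: M_def N1_def N2_def)
  have MN1: "M * N1 = four_block_mat (x \<cdot>\<^sub>m 1\<^sub>m m - K * J) K (0\<^sub>m p m) (1\<^sub>m p)"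
    unfolding M_def N1_def using K J by (subst mult_four_block_mat) auto
  have "det (M * N1) = det (x \<cdot>\<^sub>m 1\<^sub>m m - K * J)"
    unfolding MN1 by (subst det_four_block_mat_lower_left_zero[of _ m _ p]) (use K J in auto)
  moreover have "det N1 = 1"
    unfolding N1_def using J by (simp add: det_four_block_mat_upper_right_zero[of _ m _ p])
  ultimately have det_M: "det M = det (x \<cdot>\<^sub>m 1\<^sub>m m - K * J)"
    using det_mult[OF M N1] by simp
  have N2M: "N2 * M = four_block_mat (x \<cdot>\<^sub>m 1\<^sub>m m) K (0\<^sub>m p m) (x \<cdot>\<^sub>m 1\<^sub>m p - J * K)"
    unfolding M_def N2_def using K J by (subst mult_four_block_mat) auto
  have "det (N2 * M) = x ^ m * det (x \<cdot>\<^sub>m 1\<^sub>m p - J * K)"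
    unfolding N2M by (subst det_four_block_mat_lower_left_zero[of _ m _ p]) (use K J in auto)
  moreover have "det N2 = x ^ p"
    unfolding N2_def using J by (simp add: det_four_block_mat_upper_right_zero[of _ m _ p])
  ultimately show ?thesis
    using det_mult[OF N2 M] det_M by simp
qed

lemma poly_char_poly:
  fixes A :: "'a::field mat"
  assumes "A \<in> carrier_mat n n"
  shows "poly (char_poly A) x = det (x \<cdot>\<^sub>m 1\<^sub>m n - A)"
proof -
  have "- char_matrix A x = x \<cdot>\<^sub>m 1\<^sub>m n - A"
    unfolding char_matrix_def using assms by (intro eq_matI) auto
  then show ?thesis
    using char_poly_matrix[OF assms] by simp
qed

lemma char_poly_sylvester:
  fixes K :: "'a::field_char_0 mat"
  assumes K: "K \<in> carrier_mat m p" and J: "J \<in> carrier_mat p m"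
  shows "monom 1 p * char_poly (K * J) = monom 1 m * char_poly (J * K)"
proof (rule poly_ext)
  fix x
  have "K * J \<in> carrier_mat m m" and "J * K \<in> carrier_mat p p"
    using K J by auto
  then show "poly (monom 1 p * char_poly (K * J)) x = poly (monom 1 m * char_poly (J * K)) x"
    by (simp add: poly_char_poly poly_monom det_sylvester[OF K J])
qed

lemma char_poly_block_diag:
  fixes A :: "'a::field_char_0 mat"
  assumes A: "A \<in> carrier_mat n n" and D: "D \<in> carrier_mat k k"
  shows "char_poly (four_block_mat A (0\<^sub>m n k) (0\<^sub>m k n) D) = char_poly A * char_poly D"
proof (rule poly_ext)
  fix x
  have "x \<cdot>\<^sub>m 1\<^sub>m (n + k) - four_block_mat A (0\<^sub>m n k) (0\<^sub>m k n) D
      = four_block_mat (x \<cdot>\<^sub>m 1\<^sub>m n - A) (0\<^sub>m n k) (0\<^sub>m k n) (x \<cdot>\<^sub>m 1\<^sub>m k - D)"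
    using A D by (intro eq_matI) auto
  moreover have "det (four_block_mat (x \<cdot>\<^sub>m 1\<^sub>m n - A) (0\<^sub>m n k) (0\<^sub>m k n) (x \<cdot>\<^sub>m 1\<^sub>m k - D))
      = det (x \<cdot>\<^sub>m 1\<^sub>m n - A) * det (x \<cdot>\<^sub>m 1\<^sub>m k - D)"
    by (rule det_four_block_mat_lower_left_zero) (use A D in auto)
  ultimately show "poly (char_poly (four_block_mat A (0\<^sub>m n k) (0\<^sub>m k n) D)) x
      = poly (char_poly A * char_poly D) x"
    using A D by (simp add: poly_char_poly[of _ "n + k"] poly_char_poly[OF A] poly_char_poly[OF D])
qed

lemma char_poly_shift:
  fixes A :: "'a::field_char_0 mat"
  assumes A: "A \<in> carrier_mat n n"
  shows "char_poly (c \<cdot>\<^sub>m 1\<^sub>m n + A) = pcompose (char_poly A) [:-c, 1:]"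
proof (rule poly_ext)
  fix x
  have "x \<cdot>\<^sub>m 1\<^sub>m n - (c \<cdot>\<^sub>m 1\<^sub>m n + A) = (x - c) \<cdot>\<^sub>m 1\<^sub>m n - A"
    using A by (intro eq_matI) (auto simp: algebra_simps)
  then show "poly (char_poly (c \<cdot>\<^sub>m 1\<^sub>m n + A)) x = poly (pcompose (char_poly A) [:-c, 1:]) x"
    using A by (simp add: poly_char_poly[of _ n] poly_pcompose)
qed

lemma char_poly_nonzero: "A \<in> carrier_mat n n \<Longrightarrow> char_poly A \<noteq> 0"
  using degree_monic_char_poly[of A n] by auto

lemma char_poly_hodge:
  fixes P :: "'a::field_char_0 mat"
  assumes P: "P \<in> carrier_mat m a" and R: "R \<in> carrier_mat b m" and RP: "R * P = 0\<^sub>m b a"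
  shows "monom 1 (a + b) * char_poly (P * transpose_mat P + transpose_mat R * R)
    = monom 1 m * (char_poly (transpose_mat P * P) * char_poly (R * transpose_mat R))"
proof -
  \<comment> \<open>K = (P | R^T) and J = K^T, written as block matrices with empty filler blocks.\<close>
  define K where "K = four_block_mat P (transpose_mat R) (0\<^sub>m 0 a) (0\<^sub>m 0 b)"
  define J where "J = four_block_mat (transpose_mat P) (0\<^sub>m a 0) R (0\<^sub>m b 0)"
  have K: "K \<in> carrier_mat m (a + b)" and J: "J \<in> carrier_mat (a + b) m"
    using four_block_carrier_mat[of P m a "0\<^sub>m 0 b" 0 b] P
      four_block_carrier_mat[of "transpose_mat P" a m "0\<^sub>m b 0" b 0]
    by (simp_all add: K_def J_def)
  have "K * J = four_block_mat (P * transpose_mat P + transpose_mat R * R) (0\<^sub>m m 0) (0\<^sub>m 0 m) (0\<^sub>m 0 0)"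
    unfolding K_def J_def using P R by (subst mult_four_block_mat) auto
  also have "\<dots> = P * transpose_mat P + transpose_mat R * R"
    using P R by (intro eq_matI) auto
  finally have KJ: "K * J = P * transpose_mat P + transpose_mat R * R" .
  have "transpose_mat P * transpose_mat R = 0\<^sub>m a b"
    using RP P R by (metis transpose_mult zero_transpose_mat)
  then have "J * K = four_block_mat (transpose_mat P * P) (0\<^sub>m a b) (0\<^sub>m b a) (R * transpose_mat R)"
    unfolding K_def J_def using P R RP by (subst mult_four_block_mat) auto
  then have JK: "char_poly (J * K) = char_poly (transpose_mat P * P) * char_poly (R * transpose_mat R)"
    using P R by (simp add: char_poly_block_diag[of _ a _ b])
  show ?thesis
    using char_poly_sylvester[OF K J] by (simp add: KJ JK)
qed

lemma order_monom_nonzero: "x \<noteq> 0 \<Longrightarrow> order x (monom (1::'a::idom) k) = 0"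
  by (rule order_0I) (simp add: poly_monom)

lemma order_char_poly_hodge:
  fixes P :: "'a::field_char_0 mat"
  assumes P: "P \<in> carrier_mat m a" and R: "R \<in> carrier_mat b m" and RP: "R * P = 0\<^sub>m b a"
    and "x \<noteq> 0"
  shows "order x (char_poly (P * transpose_mat P + transpose_mat R * R))
    = order x (char_poly (transpose_mat P * P)) + order x (char_poly (R * transpose_mat R))"
proof -
  have nonzero: "char_poly (P * transpose_mat P + transpose_mat R * R) \<noteq> 0"
    "char_poly (transpose_mat P * P) \<noteq> 0" "char_poly (R * transpose_mat R) \<noteq> 0"
    using P R by (auto intro!: char_poly_nonzero)
  show ?thesis
    using arg_cong[OF char_poly_hodge[OF P R RP], of "order x"] nonzero \<open>x \<noteq> 0\<close>
    by (simp add: order_mult order_monom_nonzero)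
qed

lemma eigenvalue_iff_order_char_poly:
  fixes A :: "'a::field mat"
  assumes "A \<in> carrier_mat n n"
  shows "eigenvalue A x \<longleftrightarrow> order x (char_poly A) \<noteq> 0"
  using assms char_poly_nonzero[OF assms] by (simp add: eigenvalue_root_char_poly order_root)

lemma finite_eigenvalues:
  fixes A :: "'a::field mat"
  assumes "A \<in> carrier_mat n n"
  shows "finite {x. eigenvalue A x}"
  using poly_roots_finite[OF char_poly_nonzero[OF assms]]
  by (simp add: eigenvalue_root_char_poly[OF assms])

lemma eigenvalue_shift_iff:
  fixes A :: "'a::field_char_0 mat"
  assumes "A \<in> carrier_mat n n"
  shows "eigenvalue (c \<cdot>\<^sub>m 1\<^sub>m n + A) x \<longleftrightarrow> eigenvalue A (x - c)"
  using assms
  by (simp add: eigenvalue_root_char_poly[of _ n] char_poly_shift poly_pcompose)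

section \<open>Spectra of real Gram matrices\<close>

lemma eigenvalue_gram_nonneg:
  fixes K :: "real mat"
  assumes K: "K \<in> carrier_mat m n" and ev: "eigenvalue (transpose_mat K * K) x"
  shows "0 \<le> x"
proof -
  obtain v where v: "v \<in> carrier_vec n" "v \<noteq> 0\<^sub>v n" "(transpose_mat K * K) *\<^sub>v v = x \<cdot>\<^sub>v v"
    using ev K unfolding eigenvalue_def eigenvector_def by auto
  have "x * (v \<bullet> v) = (transpose_mat K *\<^sub>v (K *\<^sub>v v)) \<bullet> v"
    using v K by simp
  also have "\<dots> = (K *\<^sub>v v) \<bullet> (K *\<^sub>v v)"
    using v K by (intro transpose_vec_mult_scalar) auto
  finally have "x * (v \<bullet> v) \<ge> 0"
    using conjugate_square_ge_0_vec[of "K *\<^sub>v v"] by simp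
  moreover have "v \<bullet> v > 0"
    using conjugate_square_greater_0_vec[OF v(1)] v(2) by simp
  ultimately show ?thesis
    by (simp add: zero_le_mult_iff)
qed

lemma eigenvalue_of_real_symmetric_real:
  fixes M :: "real mat"
  assumes M: "M \<in> carrier_mat n n" and sym: "transpose_mat M = M"
    and ev: "eigenvalue (map_mat complex_of_real M) a"
  shows "a \<in> \<real>"
proof -
  let ?M = "map_mat complex_of_real M"
  obtain v where v: "v \<in> carrier_vec n" "v \<noteq> 0\<^sub>v n" "?M *\<^sub>v v = a \<cdot>\<^sub>v v"
    using ev M unfolding eigenvalue_def eigenvector_def by auto
  have real_entries: "conjugate (?M *\<^sub>v w) = ?M *\<^sub>v conjugate w" if "w \<in> carrier_vec n" for w
    using M that by (intro eq_vecI) (auto simp: scalar_prod_def cnj_sum)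
  have "a * (v \<bullet>c v) = (?M *\<^sub>v v) \<bullet>c v"
    using v by simp
  also have "\<dots> = v \<bullet> (?M *\<^sub>v conjugate v)"
    using transpose_vec_mult_scalar[of "transpose_mat ?M" n n "conjugate v" v] M v sym
    by (simp add: map_mat_transpose)
  also have "?M *\<^sub>v conjugate v = cnj a \<cdot>\<^sub>v conjugate v"
    using v real_entries[of v] by (simp add: conjugate_smult_vec)
  also have "v \<bullet> (cnj a \<cdot>\<^sub>v conjugate v) = cnj a * (v \<bullet>c v)"
    using v by simp
  finally have "a = cnj a"
    using conjugate_square_greater_0_vec[OF v(1)] v(2) by auto
  then show ?thesis
    by (metis Reals_cnj_iff)
qed

lemma symmetric_mat_has_eigenvalue:
  fixes M :: "real mat"
  assumes M: "M \<in> carrier_mat n n" and sym: "transpose_mat M = M" and "n > 0"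
  shows "\<exists>x. eigenvalue M x"
proof -
  let ?M = "map_mat complex_of_real M"
  have M': "?M \<in> carrier_mat n n"
    using M by simp
  obtain as where factors: "char_poly ?M = (\<Prod>a\<leftarrow>as. [:- a, 1:])" and "length as = n"
    using char_poly_factorized[OF M'] by auto
  then obtain a where "a \<in> set as"
    using \<open>n > 0\<close> by (cases as) auto
  then have "poly (char_poly ?M) a = 0"
    unfolding factors by (induct as) (auto simp: poly_prod_list)
  moreover have "a = of_real (Re a)"
    using eigenvalue_of_real_symmetric_real[OF M sym] calculation M'
    by (simp add: eigenvalue_root_char_poly[OF M'] Reals_def)
  ultimately have "poly (map_poly complex_of_real (char_poly M)) (of_real (Re a)) = 0"
    by (simp add: of_real_hom.char_poly_hom[OF M, symmetric])
  then have "eigenvalue M (Re a)"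
    by (simp add: eigenvalue_root_char_poly[OF M] of_real_hom.poly_map_poly)
  then show ?thesis ..
qed

lemma Max_eq_if_same_nonzero_elements:
  fixes S T :: "'a::{linorder, zero} set"
  assumes S: "finite S" "S \<noteq> {}" and T: "finite T" "T \<noteq> {}"
    and nonneg: "\<And>x. x \<in> T \<Longrightarrow> 0 \<le> x"
    and same: "\<And>x. x \<noteq> 0 \<Longrightarrow> x \<in> S \<longleftrightarrow> x \<in> T"
  shows "Max S = Max T"
proof (rule Max_eqI[OF S(1)])
  have Max_T: "Max T \<in> T" "0 \<le> Max T"
    using Max_in[OF T] nonneg by auto
  show "y \<le> Max T" if "y \<in> S" for y
    using that same[of y] Max_T T(1) by (cases "y = 0") auto
  show "Max T \<in> S"
  proof (cases "Max T = 0")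
    case True
    obtain y where "y \<in> S"
      using S(2) by blast
    then have "y = 0"
      using True same[of y] nonneg[of y] Max_ge[OF T(1), of y] by (cases "y = 0") auto
    with \<open>y \<in> S\<close> True show ?thesis by simp
  qed (use same Max_T in blast)
qed

lemma max_eig_hodge:
  fixes P :: "real mat"
  assumes P: "P \<in> carrier_mat m a" and R: "R \<in> carrier_mat b m" and RP: "R * P = 0\<^sub>m b a"
    and "0 < m" "0 < a"
  shows "max_eig (P * transpose_mat P + transpose_mat R * R) =
    (if b = 0 then max_eig (transpose_mat P * P)
     else max (max_eig (transpose_mat P * P)) (max_eig (R * transpose_mat R)))"
proof -
  let ?H = "P * transpose_mat P + transpose_mat R * R"
  let ?L = "transpose_mat P * P"
  let ?U = "R * transpose_mat R"
  have H: "?H \<in> carrier_mat m m" and L: "?L \<in> carrier_mat a a" and U: "?U \<in> carrier_mat b b"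
    using P R by auto
  have same: "eigenvalue ?H x \<longleftrightarrow> eigenvalue ?L x \<or> eigenvalue ?U x" if "x \<noteq> 0" for x
    using order_char_poly_hodge[OF P R RP that]
    by (simp add: eigenvalue_iff_order_char_poly[OF H] eigenvalue_iff_order_char_poly[OF L]
        eigenvalue_iff_order_char_poly[OF U])
  have nonneg: "0 \<le> x" if "eigenvalue ?L x \<or> eigenvalue ?U x" for x
    using that eigenvalue_gram_nonneg[OF P] eigenvalue_gram_nonneg[of "transpose_mat R" m b] R
    by auto
  have "transpose_mat ?H = ?H"
    by (subst transpose_add[of _ m m]) (use P R in \<open>auto simp: transpose_mult\<close>)
  then have "\<exists>x. eigenvalue ?H x"
    using symmetric_mat_has_eigenvalue[OF H] \<open>0 < m\<close> by blast
  moreover have L_nonempty: "{x. eigenvalue ?L x} \<noteq> {}"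
    using L P \<open>0 < a\<close> symmetric_mat_has_eigenvalue[OF L] by (auto simp: transpose_mult)
  moreover have U_empty_iff: "{x. eigenvalue ?U x} = {} \<longleftrightarrow> b = 0"
    using U R eigenvalue_imp_nonzero_dim[OF U] symmetric_mat_has_eigenvalue[OF U]
    by (auto simp: transpose_mult)
  \<comment> \<open>The eigenvalue 0 is invisible to the multiplicity identity but irrelevant for the maximum.\<close>
  ultimately have Max_H: "Max {x. eigenvalue ?H x} = Max ({x. eigenvalue ?L x} \<union> {x. eigenvalue ?U x})"
    using finite_eigenvalues[OF H] finite_eigenvalues[OF L] finite_eigenvalues[OF U] same nonneg
    by (intro Max_eq_if_same_nonzero_elements) auto
  show ?thesis
  proof (cases "b = 0")
    case True
    then show ?thesis
      using Max_H U_empty_iff unfolding max_eig_def by (metis Un_empty_right)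
  next
    case False
    then show ?thesis
      using Max_H U_empty_iff L_nonempty finite_eigenvalues[OF L] finite_eigenvalues[OF U]
      unfolding max_eig_def by (metis Max.union)
  qed
qed

lemma max_eig_shift:
  fixes A :: "real mat"
  assumes A: "A \<in> carrier_mat n n" and "eigenvalue A y"
  shows "max_eig (c \<cdot>\<^sub>m 1\<^sub>m n + A) = c + max_eig A"
proof -
  have "{x. eigenvalue (c \<cdot>\<^sub>m 1\<^sub>m n + A) x} = (+) c ` {x. eigenvalue A x}"
    by (auto simp: eigenvalue_shift_iff[OF A] image_iff) (metis add.commute diff_add_cancel)
  moreover have "{x. eigenvalue A x} \<noteq> {}"
    using \<open>eigenvalue A y\<close> by blast
  ultimately show ?thesis
    using mono_Max_commute[of "(+) c" "{x. eigenvalue A x}"] finite_eigenvalues[OF A]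
    by (simp add: max_eig_def mono_def)
qed

section \<open>Coboundary matrices of an oriented graph with triangles\<close>

definition incidence_sign :: "nat \<Rightarrow> nat \<times> nat \<Rightarrow> real" where
  "incidence_sign v e = (if v = fst e then -1 else if v = snd e then 1 else 0)"

definition orientation_sign :: "nat \<times> nat \<times> nat \<Rightarrow> nat \<times> nat \<Rightarrow> real" where
  "orientation_sign \<tau> e = (if tri_pos \<tau> e then 1 else if tri_neg \<tau> e then -1 else 0)"

definition shared_vertex_sign :: "nat \<times> nat \<Rightarrow> nat \<times> nat \<Rightarrow> real" where
  "shared_vertex_sign e e' = (if head_tail e e' then -1 else if same_end e e' then 1 else 0)"

definition grad_mat :: "nat \<Rightarrow> (nat \<times> nat) list \<Rightarrow> real mat" where
  "grad_mat n es = mat (length es) n (\<lambda>(k, v). incidence_sign v (es ! k))"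

definition curl_mat :: "(nat \<times> nat) list \<Rightarrow> (nat \<times> nat \<times> nat) list \<Rightarrow> real mat" where
  "curl_mat es ts = mat (length ts) (length es) (\<lambda>(i, k). orientation_sign (ts ! i) (es ! k))"

definition triangle_arcs :: "nat \<times> nat \<times> nat \<Rightarrow> (nat \<times> nat) set" where
  "triangle_arcs \<tau> = (case \<tau> of (a, b, c) \<Rightarrow> {(a, b), (b, c), (c, a), (b, a), (c, b), (a, c)})"

lemma sum_triangle_arcs:
  assumes "a \<noteq> b" "b \<noteq> c" "a \<noteq> c"
  shows "sum g (triangle_arcs (a, b, c)) = g (a, b) + g (b, c) + g (c, a) + g (b, a) + g (c, b) + g (a, c)"
  using assms by (simp add: triangle_arcs_def add.assoc)

lemma incidence_sign_swap: "fst e \<noteq> snd e \<Longrightarrow> incidence_sign v (prod.swap e) = - incidence_sign v e"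
  by (cases e) (auto simp: incidence_sign_def)

lemma tri_pos_swap_iff: "tri_pos \<tau> (prod.swap e) \<longleftrightarrow> tri_neg \<tau> e"
  by (cases \<tau>; cases e) (auto simp: tri_pos_def tri_neg_def)

lemma tri_pos_tri_neg_disjoint:
  "a \<noteq> b \<Longrightarrow> b \<noteq> c \<Longrightarrow> a \<noteq> c \<Longrightarrow> \<not> (tri_pos (a, b, c) e \<and> tri_neg (a, b, c) e)"
  by (auto simp: tri_pos_def tri_neg_def)

lemma orientation_sign_swap:
  assumes "a \<noteq> b" "b \<noteq> c" "a \<noteq> c"
  shows "orientation_sign (a, b, c) (prod.swap e) = - orientation_sign (a, b, c) e"
  using tri_pos_swap_iff[of "(a, b, c)" e] tri_pos_swap_iff[of "(a, b, c)" "prod.swap e"]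
    tri_pos_tri_neg_disjoint[OF assms, of e]
  by (auto simp: orientation_sign_def)

lemma orientation_sign_nonzero: "orientation_sign \<tau> e \<noteq> 0 \<Longrightarrow> e \<in> triangle_arcs \<tau>"
  by (cases \<tau>) (auto simp: orientation_sign_def tri_pos_def tri_neg_def triangle_arcs_def split: if_splits)

lemma triangle_arcs_edge_in: "e \<in> triangle_arcs \<tau> \<Longrightarrow> edge_in e (tri_set \<tau>)"
  by (cases \<tau>) (auto simp: triangle_arcs_def edge_in_def tri_set_def)

lemma orientation_sign_nonzero_edge_in: "orientation_sign \<tau> e \<noteq> 0 \<Longrightarrow> edge_in e (tri_set \<tau>)"
  using orientation_sign_nonzero triangle_arcs_edge_in by blast

lemma orientation_sign_edge_in:
  assumes "a \<noteq> b" "b \<noteq> c" "a \<noteq> c" "fst e \<noteq> snd e" "edge_in e (tri_set (a, b, c))"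
  shows "orientation_sign (a, b, c) e = (if tri_pos (a, b, c) e then 1 else -1)"
    and "tri_neg (a, b, c) e \<longleftrightarrow> \<not> tri_pos (a, b, c) e"
  using assms by (cases e; auto simp: orientation_sign_def tri_pos_def tri_neg_def edge_in_def tri_set_def)+

lemma orientation_sign_square:
  assumes "a \<noteq> b" "b \<noteq> c" "a \<noteq> c" "fst e \<noteq> snd e"
  shows "orientation_sign (a, b, c) e * orientation_sign (a, b, c) e
    = (if edge_in e (tri_set (a, b, c)) then 1 else 0)"
  using orientation_sign_edge_in[OF assms] orientation_sign_nonzero[of "(a, b, c)" e]
    triangle_arcs_edge_in[of e "(a, b, c)"]
  by (cases "edge_in e (tri_set (a, b, c))") auto

text \<open>For two edges of a common triangle the triangle term cancels the vertex term: this is why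
  h_{ee'} = 0 when e and e' lie in a triangle.\<close>
lemma orientation_sign_mult_same_triangle:
  assumes "a \<noteq> b" "b \<noteq> c" "a \<noteq> c"
    and "{x, y, x', y'} \<subseteq> {a, b, c}" "x \<noteq> y" "x' \<noteq> y'" "(x, y) \<noteq> (x', y')" "(x', y') \<noteq> (y, x)"
  shows "orientation_sign (a, b, c) (x, y) * orientation_sign (a, b, c) (x', y')
    = - shared_vertex_sign (x, y) (x', y')"
proof -
  have "(x = a \<or> x = b \<or> x = c) \<and> (y = a \<or> y = b \<or> y = c) \<and>
      (x' = a \<or> x' = b \<or> x' = c) \<and> (y' = a \<or> y' = b \<or> y' = c)"
    using assms(4) by auto
  then show ?thesis
    by (elim conjE disjE) (use assms(1-3,5-8) in \<open>simp_all add: orientation_sign_def tri_pos_def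
        tri_neg_def shared_vertex_sign_def head_tail_def same_end_def\<close>)
qed

lemma incidence_sign_sum:
  assumes "fst e < n" "snd e < n" "fst e \<noteq> snd e"
  shows "(\<Sum>v<n. incidence_sign v e * incidence_sign v e') = incidence_sign (snd e) e' - incidence_sign (fst e) e'"
proof -
  have "(\<Sum>v<n. incidence_sign v e * incidence_sign v e')
      = (\<Sum>v\<in>{fst e, snd e}. incidence_sign v e * incidence_sign v e')"
    using assms by (intro sum.mono_neutral_right) (auto simp: incidence_sign_def)
  then show ?thesis
    using assms by (simp add: incidence_sign_def)
qed

lemma sum_swap_closure:
  fixes g :: "'a \<times> 'a \<Rightarrow> 'b::comm_ring_1"
  assumes "finite E" "E \<inter> prod.swap ` E = {}" "\<And>p. p \<in> E \<Longrightarrow> g (prod.swap p) = g p"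
  shows "2 * sum g E = sum g (E \<union> prod.swap ` E)"
proof -
  have "sum g (prod.swap ` E) = sum (g \<circ> prod.swap) E"
    by (rule sum.reindex) (auto simp: inj_on_def)
  also have "\<dots> = sum g E"
    using assms(3) by (auto intro: sum.cong)
  finally have swapped: "sum g (prod.swap ` E) = sum g E" .
  have "sum g (E \<union> prod.swap ` E) = sum g E + sum g (prod.swap ` E)"
    using assms(1,2) by (intro sum.union_disjoint) auto
  then show ?thesis
    by (simp only: swapped mult_2)
qed

lemma triangles_share_at_most_two_vertices:
  assumes "is_triangle es T" "is_triangle es T'" "T \<noteq> T'"
    and "{x, y, z} \<subseteq> T \<inter> T'" "x \<noteq> y" "y \<noteq> z" "x \<noteq> z"
  shows False
proof -
  have card: "card {x, y, z} = 3" "card T = 3" "card T' = 3"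
    using assms by (auto simp: is_triangle_def)
  then have "finite T" "finite T'"
    by (auto intro: card_ge_0_finite)
  have "{x, y, z} = T"
    using card_subset_eq[OF \<open>finite T\<close>, of "{x, y, z}"] assms(4) card by auto
  moreover have "{x, y, z} = T'"
    using card_subset_eq[OF \<open>finite T'\<close>, of "{x, y, z}"] assms(4) card by auto
  ultimately show False
    using assms(3) by simp
qed

locale oriented_triangle_complex =
  fixes n :: nat and es :: "(nat \<times> nat) list" and ts :: "(nat \<times> nat \<times> nat) list"
  assumes simple: "simple_oriented_graph n es" and triangles: "oriented_triangles es ts"
begin

lemma sum_edges: "(\<Sum>k<length es. g (es ! k)) = sum g (set es)"
  using simple
  by (simp add: simple_oriented_graph_def sum_list_distinct_conv_sum_set[symmetric]
      sum_list_sum_nth atLeast0LessThan)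

lemma edge_facts:
  assumes "e \<in> set es"
  shows "fst e < n" "snd e < n" "fst e \<noteq> snd e" "prod.swap e \<notin> set es"
  using simple assms by (cases e; auto simp: simple_oriented_graph_def)+

text \<open>Summing a swap-invariant quantity over both orientations of every edge removes the
  dependence on the chosen orientation of G.\<close>
definition arcs :: "(nat \<times> nat) set" where
  "arcs = set es \<union> prod.swap ` set es"

lemma arc_iff_adj: "(u, v) \<in> arcs \<longleftrightarrow> adj es u v"
  by (force simp: arcs_def adj_def)

lemma arc_facts:
  assumes "p \<in> arcs"
  shows "fst p < n" "snd p < n" "fst p \<noteq> snd p"
  using assms edge_facts[of p] edge_facts[of "prod.swap p"] by (cases p; auto simp: arcs_def)+

lemma adj_facts: "adj es u v \<Longrightarrow> u < n \<and> v < n"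
  using arc_facts[of "(u, v)"] arc_iff_adj by simp

lemma sum_edges_eq_half_sum_arcs:
  fixes g :: "nat \<times> nat \<Rightarrow> real"
  assumes "\<And>p. p \<in> set es \<Longrightarrow> g (prod.swap p) = g p"
  shows "2 * (\<Sum>k<length es. g (es ! k)) = sum g arcs"
  unfolding sum_edges arcs_def
  by (rule sum_swap_closure) (use assms edge_facts(4) in force)+

lemma triangle_of_index: "i < length ts \<Longrightarrow> is_triangle es (tri_set (ts ! i))"
  using triangles unfolding oriented_triangles_def by (metis mem_Collect_eq nth_map nth_mem length_map)

lemma triangle_index_inj:
  "i < length ts \<Longrightarrow> j < length ts \<Longrightarrow> tri_set (ts ! i) = tri_set (ts ! j) \<Longrightarrow> i = j"
  using triangles unfolding oriented_triangles_def by (metis length_map nth_eq_iff_index_eq nth_map)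

lemma triangle_index_surj: "is_triangle es T \<Longrightarrow> \<exists>i < length ts. tri_set (ts ! i) = T"
  using triangles unfolding oriented_triangles_def by (metis in_set_conv_nth length_map mem_Collect_eq nth_map)

lemma triangle_vertices:
  assumes "i < length ts" "ts ! i = (a, b, c)"
  shows "a \<noteq> b \<and> b \<noteq> c \<and> a \<noteq> c \<and> adj es a b \<and> adj es b c \<and> adj es a c"
proof -
  have T: "is_triangle es {a, b, c}"
    using triangle_of_index[OF assms(1)] assms(2) by (simp add: tri_set_def)
  then have "card {a, b, c} = 3"
    by (simp add: is_triangle_def)
  then have "a \<noteq> b \<and> b \<noteq> c \<and> a \<noteq> c"
    by (auto simp: card_insert_if split: if_splits)
  with T show ?thesis
    unfolding is_triangle_def by auto
qed

lemma triangle_arcs_subset: "i < length ts \<Longrightarrow> triangle_arcs (ts ! i) \<subseteq> arcs"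
  using triangle_vertices[of i]
  by (cases "ts ! i") (auto simp: triangle_arcs_def arc_iff_adj adj_def)

lemma sum_incidence_sign_edges:
  assumes v: "v < n" and w: "w < n"
  shows "(\<Sum>k<length es. incidence_sign v (es ! k) * incidence_sign w (es ! k)) = laplacian n es $$ (v, w)"
proof -
  define g where "g p = incidence_sign v p * incidence_sign w p" for p
  have "2 * (\<Sum>k<length es. g (es ! k)) = sum g arcs"
    by (rule sum_edges_eq_half_sum_arcs) (use edge_facts in \<open>auto simp: g_def incidence_sign_swap\<close>)
  moreover have "sum g arcs = 2 * laplacian n es $$ (v, w)"
  proof (cases "v = w")
    case True
    let ?N = "{u. u < n \<and> adj es v u}"
    have "g p = (if fst p = v then 1 else 0) + (if snd p = v then 1 else 0)" if "p \<in> arcs" for p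
      using arc_facts(3)[OF that] True by (auto simp: g_def incidence_sign_def)
    then have "sum g arcs = (\<Sum>p\<in>arcs. (if fst p = v then 1 else 0) + (if snd p = v then 1 else 0))"
      by (rule sum.cong[OF refl])
    also have "\<dots> = real (card {p \<in> arcs. fst p = v}) + real (card {p \<in> arcs. snd p = v})"
      by (simp add: sum.distrib sum.inter_filter[symmetric] arcs_def)
    also have "{p \<in> arcs. fst p = v} = Pair v ` ?N"
      using arc_iff_adj adj_facts by auto
    also have "{p \<in> arcs. snd p = v} = (\<lambda>u. (u, v)) ` ?N"
      using arc_iff_adj adj_facts by (auto simp: adj_def)
    finally have "sum g arcs = 2 * real (card ?N)"
      by (simp add: card_image inj_on_def)
    then show ?thesis
      using True v by (simp add: laplacian_def)
  next
    case False
    have "sum g arcs = sum g (arcs \<inter> {(v, w), (w, v)})"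
      using False by (intro sum.mono_neutral_right) (auto simp: g_def incidence_sign_def arcs_def)
    also have "\<dots> = (if adj es v w then -2 else 0)"
      using False arc_iff_adj[of v w] arc_iff_adj[of w v] adj_def
      by (auto simp: g_def incidence_sign_def Int_insert_right)
    finally show ?thesis
      using False v w by (simp add: laplacian_def)
  qed
  ultimately show ?thesis
    by (simp add: g_def)
qed

lemma grad_gram_eq_laplacian: "transpose_mat (grad_mat n es) * grad_mat n es = laplacian n es"
proof (rule eq_matI)
  fix v w
  assume "v < dim_row (laplacian n es)" "w < dim_col (laplacian n es)"
  then show "(transpose_mat (grad_mat n es) * grad_mat n es) $$ (v, w) = laplacian n es $$ (v, w)"
    using sum_incidence_sign_edges[of v w]
    by (simp add: laplacian_def grad_mat_def scalar_prod_def atLeast0LessThan)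
qed (simp_all add: laplacian_def grad_mat_def)

lemma sum_triangle_edges:
  fixes g :: "nat \<times> nat \<Rightarrow> real"
  assumes i: "i < length ts" and "ts ! i = (a, b, c)"
    and swap: "\<And>p. p \<in> set es \<Longrightarrow> g (prod.swap p) = g p" and support: "\<And>p. g p \<noteq> 0 \<Longrightarrow> p \<in> triangle_arcs (a, b, c)"
  shows "2 * (\<Sum>k<length es. g (es ! k)) = sum g (triangle_arcs (a, b, c))"
proof -
  have "2 * (\<Sum>k<length es. g (es ! k)) = sum g arcs"
    using swap by (intro sum_edges_eq_half_sum_arcs)
  also have "\<dots> = sum g (triangle_arcs (a, b, c))"
    using triangle_arcs_subset[OF i] assms(2) support
    by (intro sum.mono_neutral_right) (auto simp: arcs_def)
  finally show ?thesis .
qed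

lemma sum_orientation_incidence_edges:
  assumes i: "i < length ts"
  shows "(\<Sum>k<length es. orientation_sign (ts ! i) (es ! k) * incidence_sign v (es ! k)) = 0"
proof -
  obtain a b c where t: "ts ! i = (a, b, c)"
    by (cases "ts ! i") auto
  then have abc: "a \<noteq> b" "b \<noteq> c" "a \<noteq> c"
    using triangle_vertices[OF i] by auto
  have "2 * (\<Sum>k<length es. orientation_sign (a, b, c) (es ! k) * incidence_sign v (es ! k))
      = (\<Sum>p\<in>triangle_arcs (a, b, c). orientation_sign (a, b, c) p * incidence_sign v p)"
    by (rule sum_triangle_edges[OF i t])
      (auto simp: orientation_sign_swap[OF abc] incidence_sign_swap edge_facts(3) dest: orientation_sign_nonzero)
  also have "\<dots> = 0"
    using abc by (simp add: sum_triangle_arcs incidence_sign_def orientation_sign_def tri_pos_def tri_neg_def)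
  finally show ?thesis
    by (simp add: t)
qed

lemma sum_orientation_sign_square_edges:
  assumes i: "i < length ts"
  shows "(\<Sum>k<length es. orientation_sign (ts ! i) (es ! k) * orientation_sign (ts ! i) (es ! k)) = 3"
proof -
  obtain a b c where t: "ts ! i = (a, b, c)"
    by (cases "ts ! i") auto
  then have abc: "a \<noteq> b" "b \<noteq> c" "a \<noteq> c"
    using triangle_vertices[OF i] by auto
  have "2 * (\<Sum>k<length es. orientation_sign (a, b, c) (es ! k) * orientation_sign (a, b, c) (es ! k))
      = (\<Sum>p\<in>triangle_arcs (a, b, c). orientation_sign (a, b, c) p * orientation_sign (a, b, c) p)"
    by (rule sum_triangle_edges[OF i t]) (auto simp: orientation_sign_swap[OF abc] dest: orientation_sign_nonzero)
  also have "\<dots> = 6"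
    using abc by (simp add: sum_triangle_arcs orientation_sign_def tri_pos_def tri_neg_def)
  finally show ?thesis
    by (simp add: t)
qed

lemma curl_grad_eq_zero: "curl_mat es ts * grad_mat n es = 0\<^sub>m (length ts) n"
  by (rule eq_matI)
    (simp_all add: curl_mat_def grad_mat_def scalar_prod_def atLeast0LessThan sum_orientation_incidence_edges)

lemma shared_edge_unique:
  assumes i: "i < length ts" and j: "j < length ts" and "i \<noteq> j"
    and e: "edge_in e (tri_set (ts ! i))" "edge_in e (tri_set (ts ! j))" "fst e \<noteq> snd e"
    and p: "edge_in p (tri_set (ts ! i))" "edge_in p (tri_set (ts ! j))" "fst p \<noteq> snd p"
  shows "p = e \<or> p = prod.swap e"
proof -
  have "tri_set (ts ! i) \<noteq> tri_set (ts ! j)"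
    using triangle_index_inj[OF i j] \<open>i \<noteq> j\<close> by blast
  then have "x \<in> {fst e, snd e}" if "x \<in> {fst p, snd p}" for x
    using triangles_share_at_most_two_vertices[OF triangle_of_index[OF i] triangle_of_index[OF j],
        of "fst e" "snd e" x] that e p
    by (auto simp: edge_in_def)
  then show ?thesis
    using e(3) p(3) by (cases e; cases p) auto
qed

lemma tri_signed_adj_shared_edge:
  assumes i: "i < length ts" and j: "j < length ts" and "i \<noteq> j"
    and e: "e \<in> set es" "edge_in e (tri_set (ts ! i))" "edge_in e (tri_set (ts ! j))"
  shows "tri_signed_adj es ts $$ (i, j) = orientation_sign (ts ! i) e * orientation_sign (ts ! j) e"
proof -
  let ?same = "\<lambda>e. tri_pos (ts ! i) e \<and> tri_pos (ts ! j) e \<or> tri_neg (ts ! i) e \<and> tri_neg (ts ! j) e"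
  have unique: "e' = e" if "e' \<in> set es" "edge_in e' (tri_set (ts ! i))" "edge_in e' (tri_set (ts ! j))" for e'
    using shared_edge_unique[OF i j \<open>i \<noteq> j\<close> e(2,3) edge_facts(3)[OF e(1)] that(2,3)]
      edge_facts(3)[OF that(1)] edge_facts(4)[OF e(1)] that(1) by auto
  have "\<exists>e' \<in> set es. edge_in e' (tri_set (ts ! i)) \<and> edge_in e' (tri_set (ts ! j))"
    using e by blast
  moreover have "(\<exists>e' \<in> set es. edge_in e' (tri_set (ts ! i)) \<and> edge_in e' (tri_set (ts ! j)) \<and> ?same e')
      \<longleftrightarrow> ?same e"
    using e unique by blast
  ultimately have entry: "tri_signed_adj es ts $$ (i, j) = (if ?same e then 1 else -1)"
    using i j \<open>i \<noteq> j\<close> by (simp add: tri_signed_adj_def)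
  obtain a b c where t: "ts ! i = (a, b, c)"
    by (cases "ts ! i") auto
  obtain a' b' c' where t': "ts ! j = (a', b', c')"
    by (cases "ts ! j") auto
  show ?thesis
    using orientation_sign_edge_in[of a b c e] orientation_sign_edge_in[of a' b' c' e]
      triangle_vertices[OF i t] triangle_vertices[OF j t'] edge_facts(3)[OF e(1)] e(2,3)
    unfolding entry t t' by auto
qed

lemma sum_orientation_sign_mult_edges:
  assumes i: "i < length ts" and j: "j < length ts" and "i \<noteq> j"
  shows "(\<Sum>k<length es. orientation_sign (ts ! i) (es ! k) * orientation_sign (ts ! j) (es ! k))
    = tri_signed_adj es ts $$ (i, j)"
proof (cases "\<exists>e \<in> set es. edge_in e (tri_set (ts ! i)) \<and> edge_in e (tri_set (ts ! j))")
  case True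
  then obtain e where e: "e \<in> set es" "edge_in e (tri_set (ts ! i))" "edge_in e (tri_set (ts ! j))"
    by blast
  have only_e: "p = e" if "p \<in> set es" "orientation_sign (ts ! i) p * orientation_sign (ts ! j) p \<noteq> 0" for p
    using shared_edge_unique[OF i j \<open>i \<noteq> j\<close> e(2,3) edge_facts(3)[OF e(1)]]
      orientation_sign_nonzero_edge_in[of "ts ! i" p] orientation_sign_nonzero_edge_in[of "ts ! j" p]
      edge_facts(3)[OF that(1)] edge_facts(4)[OF e(1)] that by fastforce
  have "(\<Sum>p\<in>set es. orientation_sign (ts ! i) p * orientation_sign (ts ! j) p)
      = (\<Sum>p\<in>{e}. orientation_sign (ts ! i) p * orientation_sign (ts ! j) p)"
    by (rule sum.mono_neutral_right) (use e(1) only_e in blast)+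
  then show ?thesis
    using tri_signed_adj_shared_edge[OF i j \<open>i \<noteq> j\<close> e]
      sum_edges[of "\<lambda>p. orientation_sign (ts ! i) p * orientation_sign (ts ! j) p"] by simp
next
  case False
  have "orientation_sign (ts ! i) p * orientation_sign (ts ! j) p = 0" if "p \<in> set es" for p
  proof (rule ccontr)
    assume "orientation_sign (ts ! i) p * orientation_sign (ts ! j) p \<noteq> 0"
    then have "edge_in p (tri_set (ts ! i))" "edge_in p (tri_set (ts ! j))"
      using orientation_sign_nonzero_edge_in by auto
    with False that show False
      by blast
  qed
  then have "(\<Sum>p\<in>set es. orientation_sign (ts ! i) p * orientation_sign (ts ! j) p) = 0"
    by (intro sum.neutral) blast
  moreover have "tri_signed_adj es ts $$ (i, j) = 0"
    using i j unfolding tri_signed_adj_def by (simp only: index_mat split False if_False) simp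
  ultimately show ?thesis
    using sum_edges[of "\<lambda>p. orientation_sign (ts ! i) p * orientation_sign (ts ! j) p"] by simp
qed

lemma curl_cogram_eq: "curl_mat es ts * transpose_mat (curl_mat es ts) = 3 \<cdot>\<^sub>m 1\<^sub>m (length ts) + tri_signed_adj es ts"
proof (rule eq_matI)
  fix i j
  assume "i < dim_row (3 \<cdot>\<^sub>m 1\<^sub>m (length ts) + tri_signed_adj es ts)"
    "j < dim_col (3 \<cdot>\<^sub>m 1\<^sub>m (length ts) + tri_signed_adj es ts)"
  then have ij: "i < length ts" "j < length ts"
    by (simp_all add: tri_signed_adj_def)
  then show "(curl_mat es ts * transpose_mat (curl_mat es ts)) $$ (i, j)
      = (3 \<cdot>\<^sub>m 1\<^sub>m (length ts) + tri_signed_adj es ts) $$ (i, j)"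
    using sum_orientation_sign_square_edges[of i] sum_orientation_sign_mult_edges[of i j]
    by (cases "i = j") (simp_all add: curl_mat_def tri_signed_adj_def scalar_prod_def atLeast0LessThan)
qed (simp_all add: curl_mat_def tri_signed_adj_def)

lemma sum_incidence_sign_vertices:
  assumes e: "e \<in> set es" and e': "e' \<in> set es"
  shows "(\<Sum>v<n. incidence_sign v e * incidence_sign v e') = (if e = e' then 2 else shared_vertex_sign e e')"
proof -
  have "prod.swap e' \<noteq> e"
    using edge_facts(4)[OF e'] e by auto
  then show ?thesis
    using incidence_sign_sum[OF edge_facts(1-3)[OF e], of e'] edge_facts(3)[OF e] edge_facts(3)[OF e']
    by (cases e; cases e') (auto simp: incidence_sign_def shared_vertex_sign_def head_tail_def same_end_def)
qed

lemma sum_orientation_sign_square_triangles: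
  assumes e: "e \<in> set es"
  shows "(\<Sum>i<length ts. orientation_sign (ts ! i) e * orientation_sign (ts ! i) e) = real (num_tri es e)"
proof -
  have "orientation_sign (ts ! i) e * orientation_sign (ts ! i) e = (if edge_in e (tri_set (ts ! i)) then 1 else 0)"
    if "i < length ts" for i
    using triangle_vertices[OF that] orientation_sign_square edge_facts(3)[OF e]
    by (cases "ts ! i") auto
  then have "(\<Sum>i<length ts. orientation_sign (ts ! i) e * orientation_sign (ts ! i) e)
      = real (card ({..<length ts} \<inter> {i. edge_in e (tri_set (ts ! i))}))"
    by (simp add: sum.If_cases)
  also have "{..<length ts} \<inter> {i. edge_in e (tri_set (ts ! i))} = {i \<in> {..<length ts}. edge_in e (tri_set (ts ! i))}"
    by auto
  also have "card {i \<in> {..<length ts}. edge_in e (tri_set (ts ! i))}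
      = card ((\<lambda>i. tri_set (ts ! i)) ` {i \<in> {..<length ts}. edge_in e (tri_set (ts ! i))})"
    by (rule card_image[symmetric]) (auto intro: inj_onI triangle_index_inj)
  also have "(\<lambda>i. tri_set (ts ! i)) ` {i \<in> {..<length ts}. edge_in e (tri_set (ts ! i))}
      = {T. is_triangle es T \<and> edge_in e T}"
    using triangle_of_index triangle_index_surj by auto
  finally show ?thesis
    by (simp add: num_tri_def)
qed

lemma sum_orientation_sign_mult_triangles:
  assumes e: "e \<in> set es" and e': "e' \<in> set es" and "e \<noteq> e'"
  shows "(\<Sum>i<length ts. orientation_sign (ts ! i) e * orientation_sign (ts ! i) e')
    = (if common_tri es e e' then - shared_vertex_sign e e' else 0)"
proof (cases "common_tri es e e'")
  case True
  then obtain T where T: "is_triangle es T" "edge_in e T" "edge_in e' T"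
    by (auto simp: common_tri_def)
  obtain i0 where i0: "i0 < length ts" "tri_set (ts ! i0) = T"
    using triangle_index_surj[OF T(1)] by blast
  have not_reverse: "e' \<noteq> prod.swap e"
    using edge_facts(4)[OF e] e' by auto
  \<comment> \<open>The two edges span three distinct vertices, so they lie in at most one triangle.\<close>
  obtain z where z: "z \<in> {fst e', snd e'}" "z \<notin> {fst e, snd e}"
    using \<open>e \<noteq> e'\<close> not_reverse edge_facts(3)[OF e'] by (cases e; cases e') auto
  have only_i0: "i = i0" if i: "i < length ts"
    and nonzero: "orientation_sign (ts ! i) e * orientation_sign (ts ! i) e' \<noteq> 0" for i
  proof (rule ccontr)
    assume "i \<noteq> i0"
    then have "tri_set (ts ! i) \<noteq> T"
      using triangle_index_inj[OF i i0(1)] i0(2) by auto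
    moreover have "edge_in e (tri_set (ts ! i))" "edge_in e' (tri_set (ts ! i))"
      using orientation_sign_nonzero_edge_in nonzero by auto
    ultimately show False
      using triangles_share_at_most_two_vertices[OF triangle_of_index[OF i] T(1), of "fst e" "snd e" z]
        T z edge_facts(3)[OF e] by (auto simp: edge_in_def)
  qed
  have "(\<Sum>i<length ts. orientation_sign (ts ! i) e * orientation_sign (ts ! i) e')
      = (\<Sum>i\<in>{i0}. orientation_sign (ts ! i) e * orientation_sign (ts ! i) e')"
    by (rule sum.mono_neutral_right) (use i0(1) only_i0 in blast)+
  also have "\<dots> = - shared_vertex_sign e e'"
  proof -
    obtain a b c where t: "ts ! i0 = (a, b, c)"
      by (cases "ts ! i0") auto
    have "{fst e, snd e, fst e', snd e'} \<subseteq> {a, b, c}"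
      using T(2,3) i0(2) t by (auto simp: edge_in_def tri_set_def)
    then show ?thesis
      using orientation_sign_mult_same_triangle[of a b c "fst e" "snd e" "fst e'" "snd e'"]
        triangle_vertices[OF i0(1) t] edge_facts(3)[OF e] edge_facts(3)[OF e'] \<open>e \<noteq> e'\<close> not_reverse
      by (cases e; cases e') (auto simp: t)
  qed
  finally show ?thesis
    using True by simp
next
  case False
  have "orientation_sign (ts ! i) e * orientation_sign (ts ! i) e' = 0" if "i < length ts" for i
    using False orientation_sign_nonzero_edge_in[of "ts ! i" e] orientation_sign_nonzero_edge_in[of "ts ! i" e']
      triangle_of_index[OF that] unfolding common_tri_def by auto
  then show ?thesis
    using False by (simp add: sum.neutral)
qed

lemma helmholtzian_eq_hodge:
  "helmholtzian es = grad_mat n es * transpose_mat (grad_mat n es) + transpose_mat (curl_mat es ts) * curl_mat es ts"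
proof (rule eq_matI)
  fix k l
  assume "k < dim_row (grad_mat n es * transpose_mat (grad_mat n es) + transpose_mat (curl_mat es ts) * curl_mat es ts)"
    "l < dim_col (grad_mat n es * transpose_mat (grad_mat n es) + transpose_mat (curl_mat es ts) * curl_mat es ts)"
  then have kl: "k < length es" "l < length es"
    by (simp_all add: curl_mat_def)
  then have "es ! k \<in> set es" "es ! l \<in> set es" "es ! k = es ! l \<longleftrightarrow> k = l"
    using simple by (auto simp: simple_oriented_graph_def nth_eq_iff_index_eq)
  then show "helmholtzian es $$ (k, l) = (grad_mat n es * transpose_mat (grad_mat n es)
      + transpose_mat (curl_mat es ts) * curl_mat es ts) $$ (k, l)"
    using kl sum_incidence_sign_vertices sum_orientation_sign_square_triangles
      sum_orientation_sign_mult_triangles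
    by (simp add: helmholtzian_def grad_mat_def curl_mat_def scalar_prod_def atLeast0LessThan
        shared_vertex_sign_def Let_def)
qed (simp_all add: helmholtzian_def curl_mat_def)

lemma tri_signed_adj_has_eigenvalue:
  assumes "ts \<noteq> []"
  shows "\<exists>y. eigenvalue (tri_signed_adj es ts) y"
proof -
  have A: "tri_signed_adj es ts \<in> carrier_mat (length ts) (length ts)"
    by (simp add: tri_signed_adj_def)
  have R: "curl_mat es ts \<in> carrier_mat (length ts) (length es)"
    by (simp add: curl_mat_def)
  have "transpose_mat (3 \<cdot>\<^sub>m 1\<^sub>m (length ts) + tri_signed_adj es ts) = 3 \<cdot>\<^sub>m 1\<^sub>m (length ts) + tri_signed_adj es ts"
    unfolding curl_cogram_eq[symmetric] using R by (simp add: transpose_mult)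
  then obtain x where "eigenvalue (3 \<cdot>\<^sub>m 1\<^sub>m (length ts) + tri_signed_adj es ts) x"
    using symmetric_mat_has_eigenvalue[of _ "length ts"] A assms by fastforce
  then show ?thesis
    using eigenvalue_shift_iff[OF A] by blast
qed

end

theorem theorem5p1:
  fixes n :: nat and es :: "(nat \<times> nat) list" and ts :: "(nat \<times> nat \<times> nat) list"
  assumes "simple_oriented_graph n es"
    and "es \<noteq> []"
    and "oriented_triangles es ts"
  shows "(\<forall>x::real. x \<noteq> 0 \<longrightarrow>
            order x (char_poly (helmholtzian es)) =
            order x (char_poly (laplacian n es)) + order (x - 3) (char_poly (tri_signed_adj es ts)))
     \<and> max_eig (helmholtzian es) =
         (if ts = [] then max_eig (laplacian n es)
          else max (max_eig (laplacian n es)) (3 + max_eig (tri_signed_adj es ts)))"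
proof -
  interpret oriented_triangle_complex n es ts
    using assms(1,3) by unfold_locales
  have P: "grad_mat n es \<in> carrier_mat (length es) n"
    and R: "curl_mat es ts \<in> carrier_mat (length ts) (length es)"
    and A: "tri_signed_adj es ts \<in> carrier_mat (length ts) (length ts)"
    by (simp_all add: grad_mat_def curl_mat_def tri_signed_adj_def)
  note hodge = helmholtzian_eq_hodge grad_gram_eq_laplacian curl_cogram_eq
  have spectrum: "order x (char_poly (helmholtzian es)) =
      order x (char_poly (laplacian n es)) + order (x - 3) (char_poly (tri_signed_adj es ts))" if "x \<noteq> 0" for x
    using order_char_poly_hodge[OF P R curl_grad_eq_zero that]
    by (simp add: hodge char_poly_shift[OF A] order_pcompose_shift)
  have "0 < length es" "0 < n"
    using assms(2) edge_facts(1)[of "hd es"] by simp_all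
  then have "max_eig (helmholtzian es) = (if ts = [] then max_eig (laplacian n es)
      else max (max_eig (laplacian n es)) (max_eig (3 \<cdot>\<^sub>m 1\<^sub>m (length ts) + tri_signed_adj es ts)))"
    using max_eig_hodge[OF P R curl_grad_eq_zero] by (simp add: hodge)
  moreover have "ts \<noteq> [] \<Longrightarrow> max_eig (3 \<cdot>\<^sub>m 1\<^sub>m (length ts) + tri_signed_adj es ts) = 3 + max_eig (tri_signed_adj es ts)"
    using tri_signed_adj_has_eigenvalue max_eig_shift[OF A] by blast
  ultimately show ?thesis
    using spectrum by simp
qed

end
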